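(* Consider a slotted system with diversity. There are $N$ users, $N_{sub}\ge2$ sub-carriers and slots $1,\dots,T$. In every slot, independently, the BS chooses a user uniformly at random among the $N$ users and a sub-carrier uniformly at random among the $N_{sub}$ sub-carriers, and sends an update to the chosen user on the chosen sub-carrier. The adversary uses a blocking matrix $\sigma\in\{0,1\}^{N_{sub}\times T}$, where $\sigma_j(t)=0$ means sub-carrier $j$ is blocked in slot $t$. Feasibility means $\sum_{j,t}(1-\sigma_j(t))\le\alpha T$ and at most one sub-carrier is blocked per slot, where $0<\alpha<1$ and $\alpha T\in\mathbb Z$. Ages satisfy $a_i(1)=1$. Also $a_i(t+1)=1$ if user $i$ is chosen in slot $t$ and the chosen sub-carrier is not blocked in slot $t$, and $a_i(t+1)=a_i(t)+1$ otherwise. The average age is $\Delta^{\sigma}=\frac1T\sum_{t=1}^T\frac1N\sum_i\mathbb E[a_i(t)]$. Then there exists a maximizer of $\Delta^\sigma$ over feasible $\sigma$ that blocks a single sub-carrier in exactly $\alpha T$ consecutive slots and blocks nothing else. *)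

theory Defs
  imports Complex_Main "HOL-Library.FuncSet"
begin

text \<open>Users are 0..<N, sub-carriers 0..<Nsub, slots 1..T.
  A blocking pattern is bl :: nat => nat => bool, with  bl j t  meaning
  sub-carrier j is blocked in slot t (i.e. sigma_j(t) = 0).
  A sample outcome w maps each slot t to the pair (user chosen, sub-carrier chosen).\<close>

fun age :: "(nat \<Rightarrow> nat \<Rightarrow> bool) \<Rightarrow> (nat \<Rightarrow> nat \<times> nat) \<Rightarrow> nat \<Rightarrow> nat \<Rightarrow> nat" where
  "age bl w i 0 = 1"
| "age bl w i (Suc 0) = 1"
| "age bl w i (Suc (Suc t)) =
     (if fst (w (Suc t)) = i \<and> \<not> bl (snd (w (Suc t))) (Suc t) then 1
      else age bl w i (Suc t) + 1)"

text \<open>Sample space: independent uniform choice of (user, sub-carrier) in each slot,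
  i.e. the uniform distribution on all such assignments.\<close>
definition outcomes :: "nat \<Rightarrow> nat \<Rightarrow> nat \<Rightarrow> (nat \<Rightarrow> nat \<times> nat) set" where
  "outcomes N Nsub T = {1..T} \<rightarrow>\<^sub>E ({0..<N} \<times> {0..<Nsub})"

definition expected_age :: "nat \<Rightarrow> nat \<Rightarrow> nat \<Rightarrow> (nat \<Rightarrow> nat \<Rightarrow> bool) \<Rightarrow> nat \<Rightarrow> nat \<Rightarrow> real" where
  "expected_age N Nsub T bl i t =
     (\<Sum>w\<in>outcomes N Nsub T. real (age bl w i t)) / real (card (outcomes N Nsub T))"

definition avg_age :: "nat \<Rightarrow> nat \<Rightarrow> nat \<Rightarrow> (nat \<Rightarrow> nat \<Rightarrow> bool) \<Rightarrow> real" where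
  "avg_age N Nsub T bl =
     (1 / real T) * (\<Sum>t=1..T. (1 / real N) * (\<Sum>i<N. expected_age N Nsub T bl i t))"

definition feasible :: "nat \<Rightarrow> nat \<Rightarrow> real \<Rightarrow> (nat \<Rightarrow> nat \<Rightarrow> bool) \<Rightarrow> bool" where
  "feasible Nsub T \<alpha> bl \<longleftrightarrow>
     real (card {(j, t). j < Nsub \<and> t \<in> {1..T} \<and> bl j t}) \<le> \<alpha> * real T \<and>
     (\<forall>t\<in>{1..T}. card {j. j < Nsub \<and> bl j t} \<le> 1)"

end

theory Submission
  imports Defs
begin

(* In slot s user i misses its update independently with probability q_s, which is
   x = 1 - 1/N if no sub-carrier is blocked and y = 1 - (Nsub - 1)/(N Nsub) >= x if one is.
   Hence E[a_i(t)] = 1 + q_(t-1) + q_(t-1) q_(t-2) + ..., and T (Delta - 1) is the sum, over all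
   nonempty segments of q_1, ..., q_(T-1), of the product of the segment. This sum grows with
   every entry, so an optimal pattern uses the whole budget, and an x lying between two y's can
   be moved to one end of the sequence without decreasing the sum (which end is decided by
   comparing the suffix sum left of it with the prefix sum right of it). Repeating this
   gathers the y's into one block, and the best block position yields the maximizer. *)

section \<open>Sums of products of segments\<close>

(* For w = [c_1, ..., c_n]: prefix_prod_sum w = (sum k = 0..n. c_1 ... c_k),
   suffix_prod_sum w = (sum k = 0..n. c_(n-k+1) ... c_n) and
   segment_prod_sum w = (sum 1 <= i <= j <= n. c_i ... c_j). *)

fun prefix_prod_sum :: "'a::comm_ring_1 list \<Rightarrow> 'a" where
  "prefix_prod_sum [] = 1"
| "prefix_prod_sum (c # w) = 1 + c * prefix_prod_sum w"

fun suffix_prod_sum :: "'a::comm_ring_1 list \<Rightarrow> 'a" where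
  "suffix_prod_sum [] = 1"
| "suffix_prod_sum (c # w) = suffix_prod_sum w + c * prod_list w"

fun segment_prod_sum :: "'a::comm_ring_1 list \<Rightarrow> 'a" where
  "segment_prod_sum [] = 0"
| "segment_prod_sum (c # w) = segment_prod_sum w + c * prefix_prod_sum w"

lemma prefix_prod_sum_append:
  "prefix_prod_sum (u @ v) = prefix_prod_sum u + prod_list u * (prefix_prod_sum v - 1)"
  by (induction u) (simp_all add: distrib_left mult.assoc)

lemma suffix_prod_sum_append:
  "suffix_prod_sum (u @ v) = suffix_prod_sum v + prod_list v * (suffix_prod_sum u - 1)"
  by (induction u) (simp_all add: algebra_simps)

lemma segment_prod_sum_append:
  "segment_prod_sum (u @ v) =
     segment_prod_sum u + segment_prod_sum v + (suffix_prod_sum u - 1) * (prefix_prod_sum v - 1)"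
  by (induction u) (simp_all add: prefix_prod_sum_append algebra_simps)

lemma suffix_prod_sum_snoc: "suffix_prod_sum (u @ [c]) = 1 + c * suffix_prod_sum u"
  by (simp add: suffix_prod_sum_append algebra_simps)

lemma segment_prod_sum_snoc:
  "segment_prod_sum (u @ [c]) = segment_prod_sum u + suffix_prod_sum (u @ [c]) - 1"
  by (simp add: segment_prod_sum_append suffix_prod_sum_snoc algebra_simps)

lemma prefix_prod_sum_rev [simp]: "prefix_prod_sum (rev w) = suffix_prod_sum w"
  and suffix_prod_sum_rev [simp]: "suffix_prod_sum (rev w) = prefix_prod_sum w"
  and segment_prod_sum_rev [simp]: "segment_prod_sum (rev w) = segment_prod_sum w"
  by (induction w)
    (simp_all add: prefix_prod_sum_append suffix_prod_sum_append segment_prod_sum_append algebra_simps)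

lemma prefix_prod_sum_ge_1:
  fixes w :: "'a::linordered_idom list"
  shows "\<forall>c\<in>set w. 0 \<le> c \<Longrightarrow> 1 \<le> prefix_prod_sum w"
  by (induction w) auto

lemma prefix_prod_sum_mono:
  fixes u v :: "'a::linordered_idom list"
  shows "list_all2 (\<lambda>a b. 0 \<le> a \<and> a \<le> b) u v \<Longrightarrow> prefix_prod_sum u \<le> prefix_prod_sum v"
proof (induction rule: list_all2_induct)
  case (Cons a u b v)
  have "0 \<le> prefix_prod_sum u"
    using Cons.hyps(2)
    by (intro order_trans[OF zero_le_one prefix_prod_sum_ge_1])
      (auto simp: list_all2_conv_all_nth in_set_conv_nth)
  then show ?case using Cons by (simp add: mult_mono)
qed simp

lemma segment_prod_sum_mono:
  fixes u v :: "'a::linordered_idom list"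
  shows "list_all2 (\<lambda>a b. 0 \<le> a \<and> a \<le> b) u v \<Longrightarrow> segment_prod_sum u \<le> segment_prod_sum v"
proof (induction rule: list_all2_induct)
  case (Cons a u b v)
  have "0 \<le> prefix_prod_sum u"
    using Cons.hyps(2)
    by (intro order_trans[OF zero_le_one prefix_prod_sum_ge_1])
      (auto simp: list_all2_conv_all_nth in_set_conv_nth)
  then have "a * prefix_prod_sum u \<le> b * prefix_prod_sum v"
    using Cons prefix_prod_sum_mono by (intro mult_mono) auto
  then show ?case using Cons by simp
qed simp

lemma prefix_prod_sum_replicate_le:
  fixes x :: "'a::linordered_idom"
  assumes "0 \<le> x" and "\<forall>c\<in>set w. x \<le> c"
  shows "prefix_prod_sum (replicate (length w) x) \<le> prefix_prod_sum w"
  using assms by (intro prefix_prod_sum_mono) (auto simp: list_all2_conv_all_nth)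

lemma suffix_prod_sum_replicate_le:
  fixes x :: "'a::linordered_idom"
  assumes "0 \<le> x" and "\<forall>c\<in>set w. x \<le> c"
  shows "prefix_prod_sum (replicate (length w) x) \<le> suffix_prod_sum w"
  using prefix_prod_sum_replicate_le[of x "rev w"] assms by simp

(* The coefficient of prefix_prod_sum v - 1 in the gain from moving x to the front of
   u @ x # v, see segment_prod_sum_move_front. *)
definition exchange_coeff :: "'a::comm_ring_1 \<Rightarrow> 'a list \<Rightarrow> 'a" where
  "exchange_coeff x w = (1 - x) * (suffix_prod_sum w - 1) - x * (1 - prod_list w)"

lemma exchange_coeff_snoc:
  "exchange_coeff x (w @ [c]) = c * exchange_coeff x w + (c - x)"
  by (simp add: exchange_coeff_def suffix_prod_sum_snoc algebra_simps)

lemma exchange_coeff_bound: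
  fixes x :: "'a::linordered_idom"
  assumes "0 \<le> x" and "\<forall>c\<in>set w. x \<le> c"
  shows "0 \<le> exchange_coeff x w \<and>
    x * (suffix_prod_sum w - prefix_prod_sum (replicate (length w) x))
      \<le> (prefix_prod_sum (replicate (length w) x) - 1) * exchange_coeff x w"
  using assms(2)
proof (induction w rule: rev_induct)
  case Nil
  then show ?case by (simp add: exchange_coeff_def)
next
  case (snoc c w)
  define g where "g = prefix_prod_sum (replicate (length w) x) - 1"
  define g' where "g' = prefix_prod_sum (replicate (length (w @ [c])) x) - 1"
  have IH: "0 \<le> exchange_coeff x w" "x * (suffix_prod_sum w - 1 - g) \<le> g * exchange_coeff x w"
    using snoc by (auto simp: g_def algebra_simps)
  have xc: "x \<le> c" using snoc.prems by simp
  have g': "g' = x * (1 + g)"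
    by (simp add: g_def g'_def)
  have gg': "g \<le> g'"
    using assms(1) by (simp add: g_def g'_def prefix_prod_sum_append replicate_append_same[symmetric])
  have "x * (suffix_prod_sum (w @ [c]) - 1 - g') =
      c * (x * (suffix_prod_sum w - 1 - g)) + (c - x) * g'"
    by (simp add: suffix_prod_sum_snoc g' algebra_simps)
  also have "\<dots> \<le> c * (g * exchange_coeff x w) + (c - x) * g'"
    using IH(2) xc assms(1) by (simp add: mult_left_mono)
  also have "\<dots> \<le> c * (g' * exchange_coeff x w) + (c - x) * g'"
    using gg' IH(1) xc assms(1) by (simp add: mult_left_mono mult_right_mono)
  also have "\<dots> = g' * exchange_coeff x (w @ [c])"
    by (simp add: exchange_coeff_snoc algebra_simps)
  finally have "x * (suffix_prod_sum (w @ [c]) - (g' + 1)) \<le> g' * exchange_coeff x (w @ [c])"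
    by (simp add: algebra_simps)
  moreover have "0 \<le> exchange_coeff x (w @ [c])"
    using IH(1) xc assms(1) by (simp add: exchange_coeff_snoc)
  moreover have "prefix_prod_sum (replicate (length (w @ [c])) x) = g' + 1"
    by (simp add: g'_def)
  ultimately show ?case by (simp add: add.commute)
qed

lemma suffix_minus_prefix_le_exchange_coeff:
  fixes x :: "'a::linordered_idom"
  assumes "0 \<le> x" and "\<forall>c\<in>set w. x \<le> c"
  shows "x * (suffix_prod_sum w - prefix_prod_sum w) \<le> (suffix_prod_sum w - 1) * exchange_coeff x w"
proof -
  define G where "G = prefix_prod_sum (replicate (length w) x)"
  note bound = exchange_coeff_bound[OF assms, folded G_def]
  have "x * (suffix_prod_sum w - prefix_prod_sum w) \<le> x * (suffix_prod_sum w - G)"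
    using prefix_prod_sum_replicate_le[OF assms] assms(1) by (simp add: G_def mult_left_mono)
  also have "\<dots> \<le> (G - 1) * exchange_coeff x w"
    using bound by simp
  also have "\<dots> \<le> (suffix_prod_sum w - 1) * exchange_coeff x w"
    using suffix_prod_sum_replicate_le[OF assms] bound by (simp add: G_def mult_right_mono)
  finally show ?thesis .
qed

lemma segment_prod_sum_move_front:
  fixes x :: "'a::linordered_idom"
  assumes "0 \<le> x" and "\<forall>c\<in>set u. x \<le> c"
    and "suffix_prod_sum u \<le> prefix_prod_sum v"
  shows "segment_prod_sum (u @ x # v) \<le> segment_prod_sum (x # u @ v)"
proof -
  have gain: "segment_prod_sum (x # u @ v) - segment_prod_sum (u @ x # v) =
      (prefix_prod_sum v - 1) * exchange_coeff x u - x * (suffix_prod_sum u - prefix_prod_sum u)"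
    by (simp add: segment_prod_sum_append prefix_prod_sum_append exchange_coeff_def algebra_simps)
  have "0 \<le> exchange_coeff x u"
    using exchange_coeff_bound[OF assms(1,2)] by simp
  then have "x * (suffix_prod_sum u - prefix_prod_sum u) \<le> (prefix_prod_sum v - 1) * exchange_coeff x u"
    using suffix_minus_prefix_le_exchange_coeff[OF assms(1,2)] assms(3)
    by (meson diff_right_mono mult_right_mono order_trans)
  then show ?thesis using gain by simp
qed

lemma segment_prod_sum_move_to_end:
  fixes x :: "'a::linordered_idom"
  assumes "0 \<le> x" and "\<forall>c\<in>set u. x \<le> c" and "\<forall>c\<in>set v. x \<le> c"
  shows "segment_prod_sum (u @ x # v) \<le> max (segment_prod_sum (x # u @ v)) (segment_prod_sum (u @ v @ [x]))"
proof (cases "suffix_prod_sum u \<le> prefix_prod_sum v")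
  case True
  show ?thesis using segment_prod_sum_move_front[OF assms(1,2) True] by (rule max.coboundedI1)
next
  case False
  then have "segment_prod_sum (rev v @ x # rev u) \<le> segment_prod_sum (x # rev v @ rev u)"
    using assms by (intro segment_prod_sum_move_front) auto
  then show ?thesis
    using segment_prod_sum_rev[of "u @ x # v"] segment_prod_sum_rev[of "u @ v @ [x]"] by simp
qed

section \<open>Gathering the large entries into one block\<close>

definition pattern_values :: "'a \<Rightarrow> 'a \<Rightarrow> bool list \<Rightarrow> 'a list" where
  "pattern_values x y bs = map (\<lambda>b. if b then y else x) bs"

definition block :: "nat \<Rightarrow> nat \<Rightarrow> nat \<Rightarrow> bool list" where
  "block n a m = map (\<lambda>i. a \<le> i \<and> i < a + m) [0..<n]"

definition trim :: "bool list \<Rightarrow> bool list" where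
  "trim bs = rev (dropWhile Not (rev (dropWhile Not bs)))"

lemma replicate_False_dropWhile_Not: "\<exists>k. bs = replicate k False @ dropWhile Not bs"
proof -
  have "takeWhile Not bs = replicate (length (takeWhile Not bs)) False"
    by (rule replicate_eqI) (auto dest: set_takeWhileD)
  then show ?thesis by (metis takeWhile_dropWhile_id)
qed

lemma dropWhile_Not_eq_trim: "\<exists>k. dropWhile Not bs = trim bs @ replicate k False"
  using replicate_False_dropWhile_Not[of "rev (dropWhile Not bs)"]
  by (metis rev_append rev_replicate rev_rev_ident trim_def)

lemma trim_decomp: "\<exists>a b. bs = replicate a False @ trim bs @ replicate b False"
  using replicate_False_dropWhile_Not[of bs] dropWhile_Not_eq_trim[of bs] by metis

lemma hd_trim: "trim bs \<noteq> [] \<Longrightarrow> hd (trim bs)"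
  using dropWhile_Not_eq_trim[of bs] hd_dropWhile[of Not bs] by fastforce

lemma last_trim: "trim bs \<noteq> [] \<Longrightarrow> last (trim bs)"
  using hd_dropWhile[of Not "rev (dropWhile Not bs)"] by (auto simp: trim_def last_rev)

lemma trim_Cons_False [simp]: "trim (False # bs) = trim bs"
  by (simp add: trim_def)

lemma trim_snoc_False [simp]: "trim (bs @ [False]) = trim bs"
proof (cases "\<forall>b\<in>set bs. \<not> b")
  case True
  then have "dropWhile Not bs = []" by (simp add: dropWhile_eq_Nil_conv)
  moreover have "dropWhile Not (bs @ [False]) = []" using True by (simp add: dropWhile_append2)
  ultimately show ?thesis by (simp add: trim_def del: dropWhile_eq_Nil_conv)
next
  case False
  then show ?thesis by (auto simp: trim_def dropWhile_append1)
qed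

lemma trim_inner:
  assumes "True \<in> set u" and "True \<in> set v"
  shows "trim (u @ w @ v) = dropWhile Not u @ w @ rev (dropWhile Not (rev v))"
  using assms by (simp add: trim_def dropWhile_append1)

lemma inner_False_split:
  assumes "False \<in> set (trim bs)"
  obtains u v where "bs = u @ False # v" and "True \<in> set u" and "True \<in> set v"
proof -
  obtain t1 t2 where t: "trim bs = t1 @ False # t2"
    using assms by (meson split_list)
  then have "t1 \<noteq> []" and "t2 \<noteq> []"
    using hd_trim[of bs] last_trim[of bs] by auto
  moreover have "hd t1" and "last t2"
    using hd_trim[of bs] last_trim[of bs] t \<open>t1 \<noteq> []\<close> \<open>t2 \<noteq> []\<close> by auto
  ultimately have "True \<in> set t1" and "True \<in> set t2"
    by (metis (full_types) hd_in_set, metis (full_types) last_in_set)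
  moreover obtain a b where "bs = replicate a False @ t1 @ False # t2 @ replicate b False"
    using trim_decomp[of bs] t by auto
  ultimately show ?thesis
    by (intro that[of "replicate a False @ t1" "t2 @ replicate b False"]) auto
qed

lemma count_list_replicate: "count_list (replicate n x) y = (if x = y then n else 0)"
  by (induction n) auto

lemma block_eq_replicate:
  "replicate a False @ replicate m True @ replicate b False = block (a + m + b) a m"
  unfolding block_def by (rule nth_equalityI) (auto simp: nth_append)

lemma no_inner_False_block:
  assumes "False \<notin> set (trim bs)"
  obtains a where "a + count_list bs True \<le> length bs" and "bs = block (length bs) a (count_list bs True)"
proof -
  have "trim bs = replicate (length (trim bs)) True"
    using assms by (intro replicate_eqI) (auto, metis (full_types))
  then obtain a m b where bs: "bs = replicate a False @ replicate m True @ replicate b False"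
    using trim_decomp[of bs] by metis
  then have "count_list bs True = m" and "length bs = a + m + b"
    by (simp_all add: count_list_replicate)
  then show ?thesis
    using that[of a] bs block_eq_replicate[of a m b] by simp
qed

lemma segment_prod_sum_le_block:
  fixes x y :: "'a::linordered_idom"
  assumes "0 \<le> x" and "x \<le> y"
  shows "\<exists>a. a + count_list bs True \<le> length bs \<and>
    segment_prod_sum (pattern_values x y bs)
      \<le> segment_prod_sum (pattern_values x y (block (length bs) a (count_list bs True)))"
proof (induction "count_list (trim bs) False" arbitrary: bs rule: less_induct)
  case less
  show ?case
  proof (cases "False \<in> set (trim bs)")
    case False
    then show ?thesis by (metis no_inner_False_block order_refl)
  next
    case True
    then obtain u v where bs: "bs = u @ False # v" and uv: "True \<in> set u" "True \<in> set v"
      by (rule inner_False_split)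
    have "segment_prod_sum (pattern_values x y bs) \<le>
        max (segment_prod_sum (pattern_values x y (False # u @ v)))
            (segment_prod_sum (pattern_values x y (u @ v @ [False])))"
      using segment_prod_sum_move_to_end[of x "pattern_values x y u" "pattern_values x y v"] assms
      by (auto simp: bs pattern_values_def)
    then obtain cs where cs: "cs = False # u @ v \<or> cs = u @ v @ [False]"
      and le: "segment_prod_sum (pattern_values x y bs) \<le> segment_prod_sum (pattern_values x y cs)"
      by (metis le_max_iff_disj)
    have "trim cs = trim (u @ [] @ v)"
      using cs trim_snoc_False[of "u @ v"] by auto
    then have "count_list (trim cs) False < count_list (trim bs) False"
      using trim_inner[OF uv, of "[]"] trim_inner[OF uv, of "[False]"] by (simp add: bs)
    moreover have "length cs = length bs" and "count_list cs True = count_list bs True"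
      using cs by (auto simp: bs)
    ultimately show ?thesis
      using less.hyps[of cs] le by (metis order_trans)
  qed
qed

lemma segment_prod_sum_pattern_mono:
  fixes x y :: "'a::linordered_idom"
  assumes "0 \<le> x" and "x \<le> y"
    and "length bs = length cs" and "\<forall>i<length bs. bs ! i \<longrightarrow> cs ! i"
  shows "segment_prod_sum (pattern_values x y bs) \<le> segment_prod_sum (pattern_values x y cs)"
  using assms by (intro segment_prod_sum_mono) (auto simp: list_all2_conv_all_nth pattern_values_def)

lemma optimal_block_exists:
  fixes x y :: "'a::linordered_idom"
  assumes "0 \<le> x" and "x \<le> y" and "K \<le> n"
  obtains a where "a + K \<le> n"
    and "\<And>bs. length bs = n \<Longrightarrow> count_list bs True \<le> K \<Longrightarrow>
      segment_prod_sum (pattern_values x y bs) \<le> segment_prod_sum (pattern_values x y (block n a K))"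
proof -
  define f where "f a = segment_prod_sum (pattern_values x y (block n a K))" for a
  have "Max (f ` {..n - K}) \<in> f ` {..n - K}"
    by (intro Max_in) auto
  then obtain a where a: "a \<le> n - K" and f_max: "f a = Max (f ` {..n - K})"
    by (metis atMost_iff imageE)
  have "segment_prod_sum (pattern_values x y bs) \<le> f a"
    if bs: "length bs = n" "count_list bs True \<le> K" for bs
  proof -
    obtain a0 where a0: "a0 + count_list bs True \<le> n"
      and le: "segment_prod_sum (pattern_values x y bs)
        \<le> segment_prod_sum (pattern_values x y (block n a0 (count_list bs True)))"
      using segment_prod_sum_le_block[OF assms(1,2), of bs] bs(1) by blast
    have "segment_prod_sum (pattern_values x y (block n a0 (count_list bs True)))
        \<le> f (min a0 (n - K))"
      unfolding f_def using assms a0 bs(2)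
      by (intro segment_prod_sum_pattern_mono) (auto simp: block_def)
    also have "\<dots> \<le> f a"
      unfolding f_max by (intro Max_ge) auto
    finally show ?thesis using le by simp
  qed
  then show ?thesis
    using that[of a] a assms(3) by (simp add: f_def)
qed

section \<open>Expected ages\<close>

lemma suffix_prod_sum_map_upt:
  "a \<le> b \<Longrightarrow> suffix_prod_sum (map f [a..<b]) = (\<Sum>k=a..b. \<Prod>s=k..<b. f s)"
proof (induction b)
  case (Suc b)
  show ?case
  proof (cases "a = Suc b")
    case False
    then have ab: "a \<le> b" using Suc.prems by simp
    have "suffix_prod_sum (map f [a..<Suc b]) = 1 + f b * (\<Sum>k=a..b. \<Prod>s=k..<b. f s)"
      using Suc.IH ab by (simp add: suffix_prod_sum_snoc)
    also have "\<dots> = (\<Prod>s=Suc b..<Suc b. f s) + (\<Sum>k=a..b. (\<Prod>s=k..<b. f s) * f b)"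
      by (simp add: sum_distrib_left mult.commute)
    also have "\<dots> = (\<Sum>k=a..Suc b. \<Prod>s=k..<Suc b. f s)"
      using ab by (simp add: sum.cl_ivl_Suc prod.atLeastLessThan_Suc)
    finally show ?thesis .
  qed simp
qed simp

lemma sum_suffix_prod_sum_upt:
  "(\<Sum>t=1..T. suffix_prod_sum (map q [1..<t])) = of_nat T + segment_prod_sum (map q [1..<T])"
proof (induction T)
  case (Suc T)
  show ?case
  proof (cases T)
    case (Suc T')
    then have "map q [1..<Suc T] = map q [1..<T] @ [q T]" by simp
    then show ?thesis
      using Suc.IH by (simp add: segment_prod_sum_snoc)
  qed simp
qed simp

lemma average_prod_PiE:
  fixes f :: "'i \<Rightarrow> 'b \<Rightarrow> real"
  assumes I: "finite I" and J: "J \<subseteq> I" and S: "finite S" "S \<noteq> {}"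
  shows "(\<Sum>w\<in>I \<rightarrow>\<^sub>E S. \<Prod>s\<in>J. f s (w s)) / real (card (I \<rightarrow>\<^sub>E S)) =
         (\<Prod>s\<in>J. (\<Sum>v\<in>S. f s v) / real (card S))"
proof -
  define g where "g s v = (if s \<in> J then f s v else 1)" for s v
  have prod_g: "(\<Prod>s\<in>J. f s (w s)) = (\<Prod>s\<in>I. g s (w s))" for w
    using prod.mono_neutral_right[OF I J, of "\<lambda>s. g s (w s)"] by (simp add: g_def)
  have "(\<Sum>w\<in>I \<rightarrow>\<^sub>E S. \<Prod>s\<in>J. f s (w s)) / real (card (I \<rightarrow>\<^sub>E S))
      = (\<Prod>s\<in>I. \<Sum>v\<in>S. g s v) / (\<Prod>s\<in>I. real (card S))"
    by (simp add: prod_g prod_sum_PiE[OF I, symmetric] card_PiE[OF I] S)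
  also have "\<dots> = (\<Prod>s\<in>I. (\<Sum>v\<in>S. g s v) / real (card S))"
    by (simp add: prod_dividef)
  also have "\<dots> = (\<Prod>s\<in>J. (\<Sum>v\<in>S. f s v) / real (card S))"
    using prod.mono_neutral_right[OF I J, of "\<lambda>s. (\<Sum>v\<in>S. g s v) / real (card S)"] S
    by (simp add: g_def)
  finally show ?thesis .
qed

definition stale :: "(nat \<Rightarrow> nat \<Rightarrow> bool) \<Rightarrow> nat \<Rightarrow> nat \<Rightarrow> nat \<times> nat \<Rightarrow> real" where
  "stale bl i s v = (if fst v = i \<and> \<not> bl (snd v) s then 0 else 1)"

lemma age_eq_suffix_prod_sum:
  "real (age bl w i (Suc t)) = suffix_prod_sum (map (\<lambda>s. stale bl i s (w s)) [1..<Suc t])"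
  by (induction t) (simp_all add: suffix_prod_sum_snoc stale_def)

definition blocked_count :: "nat \<Rightarrow> (nat \<Rightarrow> nat \<Rightarrow> bool) \<Rightarrow> nat \<Rightarrow> nat" where
  "blocked_count Nsub bl s = card {j. j < Nsub \<and> bl j s}"

definition miss_prob :: "nat \<Rightarrow> nat \<Rightarrow> nat \<Rightarrow> real" where
  "miss_prob N Nsub c = 1 - (real Nsub - real c) / (real N * real Nsub)"

lemma average_stale:
  assumes "i < N" and "1 \<le> Nsub"
  shows "(\<Sum>v\<in>{0..<N} \<times> {0..<Nsub}. stale bl i s v) / real (card ({0..<N} \<times> {0..<Nsub}))
    = miss_prob N Nsub (blocked_count Nsub bl s)"
proof -
  let ?S = "{0..<N} \<times> {0..<Nsub}"
  let ?B = "{j. j < Nsub \<and> bl j s}"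
  let ?F = "{i} \<times> ({0..<Nsub} - ?B)"
  have "?S \<inter> - {v. fst v = i \<and> \<not> bl (snd v) s} = ?S - ?F"
    using assms(1) by auto
  then have sum_eq: "(\<Sum>v\<in>?S. stale bl i s v) = real (card (?S - ?F))"
    by (simp add: stale_def sum.If_cases)
  have B_sub: "?B \<subseteq> {0..<Nsub}"
    by auto
  then have B_le: "card ?B \<le> Nsub"
    using card_mono[OF finite_atLeastLessThan B_sub] by simp
  have "Nsub \<le> N * Nsub"
    using assms(1) by simp
  then have diff_le: "Nsub - card ?B \<le> N * Nsub"
    by linarith
  have "?F \<subseteq> ?S"
    using assms(1) by auto
  then have "card (?S - ?F) = N * Nsub - (Nsub - card ?B)"
    using B_sub by (simp add: card_Diff_subset card_cartesian_product_singleton finite_subset)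
  then have card_eq: "real (card (?S - ?F)) = real N * real Nsub - (real Nsub - real (card ?B))"
    by (simp only: of_nat_diff[OF diff_le] of_nat_diff[OF B_le] of_nat_mult)
  show ?thesis
    using sum_eq card_eq assms by (simp add: miss_prob_def blocked_count_def field_simps)
qed

lemma expected_age_eq:
  assumes "i < N" and "1 \<le> Nsub" and "t \<in> {1..T}"
  shows "expected_age N Nsub T bl i t =
    suffix_prod_sum (map (\<lambda>s. miss_prob N Nsub (blocked_count Nsub bl s)) [1..<t])"
proof -
  let ?S = "{0..<N} \<times> {0..<Nsub}"
  let ?O = "{1..T} \<rightarrow>\<^sub>E ?S"
  have "1 \<le> t"
    using assms(3) by simp
  then have upt: "suffix_prod_sum (map f [1..<t]) = (\<Sum>k=1..t. \<Prod>s=k..<t. f s)" for f :: "nat \<Rightarrow> real"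
    by (rule suffix_prod_sum_map_upt)
  have age: "real (age bl w i t) = suffix_prod_sum (map (\<lambda>s. stale bl i s (w s)) [1..<t])" for w
    using age_eq_suffix_prod_sum[of bl w i "t - 1"] \<open>1 \<le> t\<close> by simp
  have "expected_age N Nsub T bl i t =
      (\<Sum>w\<in>?O. \<Sum>k=1..t. \<Prod>s=k..<t. stale bl i s (w s)) / real (card ?O)"
    unfolding expected_age_def outcomes_def by (simp only: age upt)
  also have "\<dots> = (\<Sum>k=1..t. (\<Sum>w\<in>?O. \<Prod>s=k..<t. stale bl i s (w s)) / real (card ?O))"
    by (subst sum.swap) (simp add: sum_divide_distrib)
  also have "\<dots> = (\<Sum>k=1..t. \<Prod>s=k..<t. (\<Sum>v\<in>?S. stale bl i s v) / real (card ?S))"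
    using assms by (intro sum.cong refl average_prod_PiE) auto
  also have "\<dots> = suffix_prod_sum (map (\<lambda>s. miss_prob N Nsub (blocked_count Nsub bl s)) [1..<t])"
    by (simp only: average_stale[OF assms(1,2)] upt)
  finally show ?thesis .
qed

lemma avg_age_eq:
  assumes "1 \<le> N" and "1 \<le> Nsub" and "1 \<le> T"
  shows "avg_age N Nsub T bl =
    1 + segment_prod_sum (map (\<lambda>s. miss_prob N Nsub (blocked_count Nsub bl s)) [1..<T]) / real T"
proof -
  let ?q = "\<lambda>s. miss_prob N Nsub (blocked_count Nsub bl s)"
  have "avg_age N Nsub T bl = (\<Sum>t=1..T. suffix_prod_sum (map ?q [1..<t])) / real T"
    using assms by (simp add: avg_age_def expected_age_eq)
  also have "\<dots> = (real T + segment_prod_sum (map ?q [1..<T])) / real T"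
    by (simp only: sum_suffix_prod_sum_upt)
  finally show ?thesis
    using assms by (simp add: field_simps)
qed

lemma miss_prob_nonneg: "1 \<le> N \<Longrightarrow> 0 \<le> miss_prob N Nsub c"
proof -
  assume "1 \<le> N"
  have "(real Nsub - real c) / (real N * real Nsub) \<le> real Nsub / (real N * real Nsub)"
    by (intro divide_right_mono) auto
  also have "\<dots> \<le> 1"
    using \<open>1 \<le> N\<close> by (cases "Nsub = 0") (simp_all add: field_simps)
  finally show ?thesis by (simp add: miss_prob_def)
qed

lemma miss_prob_mono: "c \<le> c' \<Longrightarrow> miss_prob N Nsub c \<le> miss_prob N Nsub c'"
  unfolding miss_prob_def by (intro diff_left_mono divide_right_mono) auto

(* Slot T is left out: no age a_i(t) with t <= T depends on it. *)
definition blocked_slots :: "nat \<Rightarrow> nat \<Rightarrow> (nat \<Rightarrow> nat \<Rightarrow> bool) \<Rightarrow> bool list" where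
  "blocked_slots Nsub T bl = map (\<lambda>s. blocked_count Nsub bl s = 1) [1..<T]"

lemma avg_age_eq_pattern:
  assumes "feasible Nsub T \<alpha> bl" and "1 \<le> N" and "1 \<le> Nsub" and "1 \<le> T"
  shows "avg_age N Nsub T bl = 1 + segment_prod_sum
    (pattern_values (miss_prob N Nsub 0) (miss_prob N Nsub 1) (blocked_slots Nsub T bl)) / real T"
proof -
  have "map (\<lambda>s. miss_prob N Nsub (blocked_count Nsub bl s)) [1..<T] =
      pattern_values (miss_prob N Nsub 0) (miss_prob N Nsub 1) (blocked_slots Nsub T bl)"
    unfolding pattern_values_def blocked_slots_def map_map
  proof (rule map_cong)
    fix s assume "s \<in> set [1..<T]"
    then have "blocked_count Nsub bl s \<le> 1"
      using assms(1) by (simp add: feasible_def blocked_count_def)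
    then show "miss_prob N Nsub (blocked_count Nsub bl s) =
        ((\<lambda>b. if b then miss_prob N Nsub 1 else miss_prob N Nsub 0) \<circ> (\<lambda>s. blocked_count Nsub bl s = 1)) s"
      by (cases "blocked_count Nsub bl s") auto
  qed simp
  then show ?thesis
    using avg_age_eq[OF assms(2-4)] by simp
qed

lemma count_blocked_slots_le:
  "count_list (blocked_slots Nsub T bl) True \<le> card {(j, t). j < Nsub \<and> t \<in> {1..T} \<and> bl j t}"
proof -
  let ?P = "{(j, t). j < Nsub \<and> t \<in> {1..T} \<and> bl j t}"
  have "count_list (blocked_slots Nsub T bl) True = card {s \<in> {1..<T}. blocked_count Nsub bl s = 1}"
    by (simp add: blocked_slots_def count_list_eq_length_filter filter_map comp_def
        distinct_card[symmetric] eq_commute[of True])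
  also have "\<dots> \<le> card (snd ` ?P)"
  proof (rule card_mono)
    show "finite (snd ` ?P)"
      by (rule finite_imageI, rule finite_subset[of _ "{0..<Nsub} \<times> {1..T}"]) auto
    show "{s \<in> {1..<T}. blocked_count Nsub bl s = 1} \<subseteq> snd ` ?P"
      by (force simp: blocked_count_def card_Suc_eq)
  qed
  also have "\<dots> \<le> card ?P"
    by (rule card_image_le, rule finite_subset[of _ "{0..<Nsub} \<times> {1..T}"]) auto
  finally show ?thesis .
qed

definition single_block :: "nat \<Rightarrow> nat \<Rightarrow> nat \<Rightarrow> nat \<Rightarrow> bool" where
  "single_block t0 K j t \<longleftrightarrow> j = 0 \<and> t0 \<le> t \<and> t < t0 + K"

lemma blocked_count_single_block:
  "1 \<le> Nsub \<Longrightarrow> blocked_count Nsub (single_block t0 K) s = (if t0 \<le> s \<and> s < t0 + K then 1 else 0)"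
proof -
  assume "1 \<le> Nsub"
  then have "{j. j < Nsub \<and> single_block t0 K j s} = (if t0 \<le> s \<and> s < t0 + K then {0} else {})"
    by (auto simp: single_block_def)
  then show ?thesis by (simp add: blocked_count_def)
qed

lemma feasible_single_block:
  assumes "1 \<le> Nsub" and "1 \<le> t0" and "t0 + K \<le> T + 1" and "real K \<le> \<alpha> * real T"
  shows "feasible Nsub T \<alpha> (single_block t0 K)"
proof -
  have "{(j, t). j < Nsub \<and> t \<in> {1..T} \<and> single_block t0 K j t} = (\<lambda>t. (0, t)) ` {t0..<t0 + K}"
    using assms(1-3) by (auto simp: single_block_def)
  then have "card {(j, t). j < Nsub \<and> t \<in> {1..T} \<and> single_block t0 K j t} = K"
    by (simp add: card_image inj_on_def)
  then show ?thesis
    using assms(1,4) blocked_count_single_block[of Nsub t0 K]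
    by (simp add: feasible_def blocked_count_def)
qed

lemma blocked_slots_single_block:
  assumes "1 \<le> Nsub" and "a + K \<le> T - 1"
  shows "blocked_slots Nsub T (single_block (Suc a) K) = block (T - 1) a K"
  using assms by (intro nth_equalityI) (auto simp: blocked_slots_def block_def blocked_count_single_block)

lemma slot_budget:
  assumes "1 \<le> T" and "0 < \<alpha>" and "\<alpha> < 1" and "\<alpha> * real T \<in> \<int>"
  obtains K where "real K = \<alpha> * real T" and "K \<le> T - 1"
proof -
  have "0 < \<alpha> * real T"
    using assms(1,2) by simp
  then have "\<alpha> * real T \<in> \<nat>"
    using assms(4) by (auto simp: Nats_altdef1 elim!: Ints_cases)
  then obtain K where K: "real K = \<alpha> * real T"
    by (auto elim!: Nats_cases)
  moreover have "\<alpha> * real T < real T"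
    using assms(1,3) by simp
  ultimately show ?thesis
    using that[of K] by linarith
qed

lemma single_block_maximizes_avg_age:
  assumes "1 \<le> N" and "1 \<le> Nsub" and "1 \<le> T"
    and K: "real K = \<alpha> * real T" and "K \<le> T - 1"
  obtains a where "a + K \<le> T - 1" and "feasible Nsub T \<alpha> (single_block (Suc a) K)"
    and "\<And>bl. feasible Nsub T \<alpha> bl \<Longrightarrow> avg_age N Nsub T bl \<le> avg_age N Nsub T (single_block (Suc a) K)"
proof -
  let ?pv = "pattern_values (miss_prob N Nsub 0) (miss_prob N Nsub 1)"
  obtain a where a: "a + K \<le> T - 1"
    and a_opt: "\<And>bs. length bs = T - 1 \<Longrightarrow> count_list bs True \<le> K \<Longrightarrow>
      segment_prod_sum (?pv bs) \<le> segment_prod_sum (?pv (block (T - 1) a K))"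
    by (rule optimal_block_exists[OF miss_prob_nonneg[OF assms(1), where Nsub = Nsub]
        miss_prob_mono[OF zero_le_one, where N = N and Nsub = Nsub] \<open>K \<le> T - 1\<close>]) blast
  have feasible: "feasible Nsub T \<alpha> (single_block (Suc a) K)"
    using assms(2) a K by (intro feasible_single_block) auto
  have "avg_age N Nsub T bl \<le> avg_age N Nsub T (single_block (Suc a) K)"
    if bl: "feasible Nsub T \<alpha> bl" for bl
  proof -
    have "real (count_list (blocked_slots Nsub T bl) True) \<le> real K"
      using count_blocked_slots_le[of Nsub T bl] bl K by (simp add: feasible_def)
    then have "segment_prod_sum (?pv (blocked_slots Nsub T bl)) \<le> segment_prod_sum (?pv (block (T - 1) a K))"
      by (intro a_opt) (simp_all add: blocked_slots_def)
    then show ?thesis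
      using avg_age_eq_pattern[OF bl assms(1-3)] avg_age_eq_pattern[OF feasible assms(1-3)]
      by (simp add: blocked_slots_single_block[OF assms(2) a] divide_right_mono)
  qed
  then show ?thesis
    using that a feasible by blast
qed

theorem theorem8:
  fixes N Nsub T :: nat and \<alpha> :: real
  assumes "N \<ge> 1" and "Nsub \<ge> 2" and "T \<ge> 1"
    and "0 < \<alpha>" and "\<alpha> < 1" and "\<alpha> * real T \<in> \<int>"
  shows "\<exists>bl. feasible Nsub T \<alpha> bl \<and>
           (\<forall>bl'. feasible Nsub T \<alpha> bl' \<longrightarrow> avg_age N Nsub T bl' \<le> avg_age N Nsub T bl) \<and>
           (\<exists>j t0 K. j < Nsub \<and> real K = \<alpha> * real T \<and> 1 \<le> t0 \<and> t0 + K \<le> T + 1 \<and>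
              (\<forall>j'<Nsub. \<forall>t\<in>{1..T}. bl j' t \<longleftrightarrow> (j' = j \<and> t0 \<le> t \<and> t < t0 + K)))"
proof -
  have Nsub: "1 \<le> Nsub"
    using assms(2) by simp
  obtain K where K: "real K = \<alpha> * real T" and "K \<le> T - 1"
    using slot_budget assms(3-6) by blast
  then obtain a where a: "a + K \<le> T - 1"
    and feasible: "feasible Nsub T \<alpha> (single_block (Suc a) K)"
    and optimal: "\<And>bl. feasible Nsub T \<alpha> bl \<Longrightarrow>
      avg_age N Nsub T bl \<le> avg_age N Nsub T (single_block (Suc a) K)"
    using single_block_maximizes_avg_age[OF assms(1) Nsub assms(3)] by blast
  have "\<forall>j'<Nsub. \<forall>t\<in>{1..T}. single_block (Suc a) K j' t \<longleftrightarrow> (j' = 0 \<and> Suc a \<le> t \<and> t < Suc a + K)"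
    by (simp add: single_block_def)
  then show ?thesis
    using feasible optimal K a Nsub
    by (intro exI[of _ "single_block (Suc a) K"] conjI allI impI exI[of _ 0] exI[of _ "Suc a"] exI[of _ K]) auto
qed

end
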